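(* If the system $\dot{z}(t) = A_{-1}\dot{z}(t-1)+L z_t+Bu$, $t\ge 0$, is exactly controllable at time $T$, then for any matrix $P\in\mathbb{C}^{r\times n}$ the perturbed system $$\dot z(t) = (A_{-1}+BP)\dot z(t-1) + L z_t + Bu$$ is exactly controllable at the same time $T$.
   Context: Consider the neutral type time-delay system $\dot{z}(t) = A_{-1}\dot{z}(t-1)+L z_t+Bu$, $t\ge 0$, where $A_{-1}\in\mathbb{R}^{n\times n}$, $B\in\mathbb{R}^{n\times r}$ are constant matrices, $z_t:[-1,0]\to\mathbb{C}^n$ is the history $z_t(s)=z(t+s)$, and the delay operator is $L f=\int_{-1}^0 A_2(\theta)\frac{\mathrm{d}}{\mathrm{d}\theta}f(\theta)\,\mathrm{d}\theta+\int_{-1}^0 A_3(\theta)f(\theta)\,\mathrm{d}\theta$, with $A_2,A_3$ $n\times n$ matrices whose entries belong to $L_2([-1,0],\mathbb{C})$. The system is said to be exactly controllable at time $T$ if for every $f\in H^1(T-1,T;\mathbb{C}^n)$ there exists a control $u\in L_2(0,T;\mathbb{C}^r)$ such that the solution with zero initial condition $z(t)=0$, $t\in[-1,0]$, satisfies $z(t)=f(t)$ for $t\in[T-1,T]$ (equivalently, the reachability set from $0$ at time $T$ of the associated operator model on $M_2=\mathbb{C}^n\times L_2(-1,0;\mathbb{C}^n)$ equals the domain $\mathcal{D}(\mathcal{A})$ of the system operator). *)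

theory Defs
  imports "HOL-Analysis.Analysis"
begin

definition L2_on :: "real set \<Rightarrow> (real \<Rightarrow> 'a::{banach,second_countable_topology}) \<Rightarrow> bool" where
  "L2_on S f \<longleftrightarrow> set_borel_measurable lborel S f \<and>
     set_integrable lborel S (\<lambda>t. (norm (f t))^2)"

definition H1_with_deriv :: "real \<Rightarrow> real \<Rightarrow> (real \<Rightarrow> 'a::euclidean_space) \<Rightarrow> (real \<Rightarrow> 'a) \<Rightarrow> bool" where
  "H1_with_deriv a b z g \<longleftrightarrow> L2_on {a..b} g \<and>
     (\<forall>t\<in>{a..b}. z t = z a + (LINT s:{a..t}|lborel. g s))"

definition H1_on :: "real \<Rightarrow> real \<Rightarrow> (real \<Rightarrow> 'a::euclidean_space) \<Rightarrow> bool" where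
  "H1_on a b z \<longleftrightarrow> (\<exists>g. H1_with_deriv a b z g)"

definition cmat :: "real^'m^'k \<Rightarrow> complex^'m^'k" where
  "cmat M = (\<chi> i j. complex_of_real (M $ i $ j))"

definition neutral_solution ::
  "complex^'n^'n \<Rightarrow> (real \<Rightarrow> complex^'n^'n) \<Rightarrow> (real \<Rightarrow> complex^'n^'n) \<Rightarrow> complex^'r^'n
   \<Rightarrow> real \<Rightarrow> (real \<Rightarrow> complex^'r) \<Rightarrow> (real \<Rightarrow> complex^'n) \<Rightarrow> bool" where
  "neutral_solution Am1 A2 A3 B T u z \<longleftrightarrow>
     (\<forall>t\<in>{-1..0}. z t = 0) \<and>
     (\<exists>g. H1_with_deriv (-1) T z g \<and>
        (AE t in lborel. t \<in> {0..T} \<longrightarrow>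
           g t = Am1 *v g (t - 1)
               + (LINT \<theta>:{-1..0}|lborel. A2 \<theta> *v g (t + \<theta>))
               + (LINT \<theta>:{-1..0}|lborel. A3 \<theta> *v z (t + \<theta>))
               + B *v u t))"

definition exactly_controllable ::
  "complex^'n^'n \<Rightarrow> (real \<Rightarrow> complex^'n^'n) \<Rightarrow> (real \<Rightarrow> complex^'n^'n) \<Rightarrow> complex^'r^'n
   \<Rightarrow> real \<Rightarrow> bool" where
  "exactly_controllable Am1 A2 A3 B T \<longleftrightarrow>
     (\<forall>f::real \<Rightarrow> complex^'n. H1_on (T - 1) T f \<longrightarrow>
        (\<exists>u::real \<Rightarrow> complex^'r. L2_on {0..T} u \<and>
           (\<exists>z. neutral_solution Am1 A2 A3 B T u z \<and> (\<forall>t\<in>{T-1..T}. z t = f t))))"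

end

theory Submission
  imports Defs
begin

text \<open>If the control u steers the unperturbed system along z, the feedback control
  u(t) - P z'(t-1) steers the perturbed system along the same trajectory, because
  B (u(t) - P z'(t-1)) + (A_{-1} + B P) z'(t-1) = B u(t) + A_{-1} z'(t-1).
  The new control is square integrable since z' is, so every target reached before
  is still reached.\<close>

lemma set_borel_measurable_continuous_compose:
  fixes f :: "'a \<Rightarrow> 'b::real_normed_vector" and h :: "'b \<Rightarrow> 'c::real_normed_vector"
  assumes "set_borel_measurable M A f" "continuous_on UNIV h" "h 0 = 0"
  shows "set_borel_measurable M A (\<lambda>x. h (f x))"
proof -
  have "(\<lambda>x. indicator A x *\<^sub>R h (f x)) = (\<lambda>x. h (indicator A x *\<^sub>R f x))"
    using assms(3) by (simp add: fun_eq_iff split: split_indicator)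
  moreover have "(\<lambda>x. h (indicator A x *\<^sub>R f x)) \<in> borel_measurable M"
    using assms(1) borel_measurable_continuous_onI[OF assms(2)]
    unfolding set_borel_measurable_def by measurable
  ultimately show ?thesis
    unfolding set_borel_measurable_def by simp
qed

lemma set_borel_measurable_norm_square:
  fixes f :: "'a \<Rightarrow> 'b::real_normed_vector"
  assumes "set_borel_measurable M A f"
  shows "set_borel_measurable M A (\<lambda>x. (norm (f x))\<^sup>2)"
  using assms
  by (rule set_borel_measurable_continuous_compose[where h = "\<lambda>x. (norm x)\<^sup>2"])
    (auto intro: continuous_intros)

lemma L2_on_bounded_linear:
  fixes f :: "real \<Rightarrow> 'a::{banach,second_countable_topology}"
    and h :: "'a \<Rightarrow> 'b::{banach,second_countable_topology}"
  assumes h: "bounded_linear h" and f: "L2_on S f"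
  shows "L2_on S (\<lambda>t. h (f t))"
proof -
  obtain K where K: "\<And>x. norm (h x) \<le> norm x * K"
    using bounded_linear.bounded[OF h] by blast
  have meas: "set_borel_measurable lborel S (\<lambda>t. h (f t))"
  proof (rule set_borel_measurable_continuous_compose[where f = f and h = h])
    show "set_borel_measurable lborel S f"
      using f unfolding L2_on_def by blast
    show "continuous_on UNIV h"
      using h by (rule linear_continuous_on)
    show "h 0 = 0"
      using h by (simp add: linear_0 bounded_linear.linear)
  qed
  have "set_integrable lborel S (\<lambda>t. K\<^sup>2 * (norm (f t))\<^sup>2)"
    using f unfolding L2_on_def by simp
  moreover have "AE t in lborel. t \<in> S \<longrightarrow>
      norm ((norm (h (f t)))\<^sup>2) \<le> norm (K\<^sup>2 * (norm (f t))\<^sup>2)"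
  proof (intro AE_I2 impI)
    fix t
    have "(norm (h (f t)))\<^sup>2 \<le> (norm (f t) * K)\<^sup>2"
      using K[of "f t"] by (simp add: power_mono)
    then show "norm ((norm (h (f t)))\<^sup>2) \<le> norm (K\<^sup>2 * (norm (f t))\<^sup>2)"
      by (simp add: power_mult_distrib mult.commute)
  qed
  ultimately have "set_integrable lborel S (\<lambda>t. (norm (h (f t)))\<^sup>2)"
    by (rule set_integrable_bound[OF _ set_borel_measurable_norm_square[OF meas]])
  with meas show ?thesis
    unfolding L2_on_def by blast
qed

lemma norm_diff_square_le:
  fixes x y :: "'a::real_normed_vector"
  shows "(norm (x - y))\<^sup>2 \<le> 2 * (norm x)\<^sup>2 + 2 * (norm y)\<^sup>2"
proof -
  have "(norm (x - y))\<^sup>2 \<le> (norm x + norm y)\<^sup>2"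
    by (simp add: norm_triangle_ineq4 power_mono)
  also have "\<dots> \<le> 2 * (norm x)\<^sup>2 + 2 * (norm y)\<^sup>2"
    using zero_le_power2[of "norm x - norm y"] unfolding power2_sum power2_diff by linarith
  finally show ?thesis .
qed

lemma L2_on_diff:
  fixes u v :: "real \<Rightarrow> 'a::{banach,second_countable_topology}"
  assumes u: "L2_on S u" and v: "L2_on S v"
  shows "L2_on S (\<lambda>t. u t - v t)"
proof -
  have "(\<lambda>t. indicator S t *\<^sub>R (u t - v t)) = (\<lambda>t. indicator S t *\<^sub>R u t - indicator S t *\<^sub>R v t)"
    by (simp add: scaleR_diff_right)
  moreover have "(\<lambda>t. indicator S t *\<^sub>R u t - indicator S t *\<^sub>R v t) \<in> borel_measurable lborel"
    using u v unfolding L2_on_def set_borel_measurable_def by (intro borel_measurable_diff) auto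
  ultimately have meas: "set_borel_measurable lborel S (\<lambda>t. u t - v t)"
    unfolding set_borel_measurable_def by simp
  have "set_integrable lborel S (\<lambda>t. 2 * (norm (u t))\<^sup>2 + 2 * (norm (v t))\<^sup>2)"
    using u v unfolding L2_on_def by simp
  moreover have "AE t in lborel. t \<in> S \<longrightarrow>
      norm ((norm (u t - v t))\<^sup>2) \<le> norm (2 * (norm (u t))\<^sup>2 + 2 * (norm (v t))\<^sup>2)"
    using norm_diff_square_le by (intro AE_I2) auto
  ultimately have "set_integrable lborel S (\<lambda>t. (norm (u t - v t))\<^sup>2)"
    by (rule set_integrable_bound[OF _ set_borel_measurable_norm_square[OF meas]])
  with meas show ?thesis
    unfolding L2_on_def by blast
qed

lemma L2_on_subset:
  fixes f :: "real \<Rightarrow> 'a::{banach,second_countable_topology}"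
  assumes f: "L2_on A f" and "B \<subseteq> A" "B \<in> sets lborel"
  shows "L2_on B f"
proof -
  have "(\<lambda>t. indicator B t *\<^sub>R f t) = (\<lambda>t. indicator B t *\<^sub>R (indicator A t *\<^sub>R f t))"
    using \<open>B \<subseteq> A\<close> by (auto simp: fun_eq_iff split: split_indicator)
  moreover have "(\<lambda>t. indicator B t *\<^sub>R (indicator A t *\<^sub>R f t)) \<in> borel_measurable lborel"
  proof (rule borel_measurable_scaleR)
    show "(\<lambda>t. indicator B t :: real) \<in> borel_measurable lborel"
      using \<open>B \<in> sets lborel\<close> by simp
    show "(\<lambda>t. indicator A t *\<^sub>R f t) \<in> borel_measurable lborel"
      using f unfolding L2_on_def set_borel_measurable_def by blast
  qed
  ultimately have "set_borel_measurable lborel B f"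
    unfolding set_borel_measurable_def by simp
  moreover have "set_integrable lborel B (\<lambda>t. (norm (f t))\<^sup>2)"
    using set_integrable_subset f assms(2,3) unfolding L2_on_def by blast
  ultimately show ?thesis
    unfolding L2_on_def by blast
qed

lemma L2_on_translate:
  fixes f :: "real \<Rightarrow> 'a::{banach,second_countable_topology}"
  assumes f: "L2_on {a..b} f"
  shows "L2_on {a+c..b+c} (\<lambda>t. f (t - c))"
proof -
  have shift: "indicator {a+c..b+c} t = (indicator {a..b} (t - c) :: real)" for t
    by (auto split: split_indicator)
  have "(\<lambda>t. indicator {a..b} t *\<^sub>R f t) \<in> borel_measurable lborel"
    using f unfolding L2_on_def set_borel_measurable_def by blast
  then have "(\<lambda>t. indicator {a..b} (t - c) *\<^sub>R f (t - c)) \<in> borel_measurable lborel"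
    by (rule measurable_compose[rotated]) simp
  moreover have "integrable lborel (\<lambda>t. indicator {a..b} t *\<^sub>R (norm (f t))\<^sup>2)"
    using f unfolding L2_on_def set_integrable_def by blast
  then have "integrable lborel (\<lambda>t. indicator {a..b} (t - c) *\<^sub>R (norm (f (t - c)))\<^sup>2)"
    using lborel_integrable_real_affine[of _ 1 "- c"] by simp
  ultimately show ?thesis
    unfolding L2_on_def set_borel_measurable_def set_integrable_def shift
    by blast
qed

lemma neutral_solution_feedback:
  assumes "neutral_solution Am1 A2 A3 B T u z"
  obtains g where "H1_with_deriv (-1) T z g"
    and "neutral_solution (Am1 + B ** P) A2 A3 B T (\<lambda>t. u t - P *v g (t - 1)) z"
proof -
  obtain g where z0: "\<forall>t\<in>{-1..0}. z t = 0" and g: "H1_with_deriv (-1) T z g"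
    and eq: "AE t in lborel. t \<in> {0..T} \<longrightarrow>
           g t = Am1 *v g (t - 1)
               + (LINT \<theta>:{-1..0}|lborel. A2 \<theta> *v g (t + \<theta>))
               + (LINT \<theta>:{-1..0}|lborel. A3 \<theta> *v z (t + \<theta>))
               + B *v u t"
    using assms unfolding neutral_solution_def by blast
  have feedback: "(Am1 + B ** P) *v g (t - 1) + B *v (u t - P *v g (t - 1))
      = Am1 *v g (t - 1) + B *v u t" for t
  proof -
    have "(Am1 + B ** P) *v g (t - 1) = Am1 *v g (t - 1) + B *v (P *v g (t - 1))"
      by (simp only: matrix_vector_mult_add_rdistrib matrix_vector_mul_assoc)
    moreover have "B *v (u t - P *v g (t - 1)) = B *v u t - B *v (P *v g (t - 1))"
      by (rule matrix_vector_mult_diff_distrib)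
    ultimately show ?thesis
      by simp
  qed
  have regroup: "a + i2 + i3 + b = (a + b) + i2 + i3" for a b i2 i3 :: "complex^'n"
    by (simp only: ac_simps)
  have "AE t in lborel. t \<in> {0..T} \<longrightarrow>
           g t = (Am1 + B ** P) *v g (t - 1)
               + (LINT \<theta>:{-1..0}|lborel. A2 \<theta> *v g (t + \<theta>))
               + (LINT \<theta>:{-1..0}|lborel. A3 \<theta> *v z (t + \<theta>))
               + B *v (u t - P *v g (t - 1))"
    using eq by (rule AE_mp) (intro AE_I2 impI, simp only: regroup feedback)
  with z0 g show thesis
    by (intro that[OF g]) (auto simp: neutral_solution_def)
qed

theorem lemma1:
  fixes Am1 :: "real^'n^'n" and B :: "real^'r^'n"
    and A2 A3 :: "real \<Rightarrow> complex^'n^'n" and T :: real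
    and P :: "complex^'n^'r"
  assumes "\<forall>i j. L2_on {-1..0} (\<lambda>\<theta>. A2 \<theta> $ i $ j)"
    and "\<forall>i j. L2_on {-1..0} (\<lambda>\<theta>. A3 \<theta> $ i $ j)"
    and "exactly_controllable (cmat Am1) A2 A3 (cmat B) T"
  shows "exactly_controllable (cmat Am1 + cmat B ** P) A2 A3 (cmat B) T"
  unfolding exactly_controllable_def
proof (intro allI impI)
  fix f :: "real \<Rightarrow> complex^'n"
  assume "H1_on (T - 1) T f"
  then obtain u z where u: "L2_on {0..T} u"
    and z: "neutral_solution (cmat Am1) A2 A3 (cmat B) T u z"
    and target: "\<forall>t\<in>{T-1..T}. z t = f t"
    using assms(3) unfolding exactly_controllable_def by blast
  obtain g where g: "H1_with_deriv (-1) T z g" and z':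
    "neutral_solution (cmat Am1 + cmat B ** P) A2 A3 (cmat B) T (\<lambda>t. u t - P *v g (t - 1)) z"
    using neutral_solution_feedback[OF z] by blast
  have "L2_on {-1..T-1} g"
    using g by (auto simp: H1_with_deriv_def intro: L2_on_subset)
  then have "L2_on {0..T} (\<lambda>t. g (t - 1))"
    using L2_on_translate[of "-1" "T - 1" g 1] by simp
  then have "L2_on {0..T} (\<lambda>t. u t - P *v g (t - 1))"
    using L2_on_diff[OF u] L2_on_bounded_linear[of "(*v) P"] by simp
  with z' target show "\<exists>u. L2_on {0..T} u \<and>
      (\<exists>z. neutral_solution (cmat Am1 + cmat B ** P) A2 A3 (cmat B) T u z \<and>
           (\<forall>t\<in>{T - 1..T}. z t = f t))"
    by blast
qed

end
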